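(* Let $m,n$ be positive integers. The set $\{B_{i,j}: i\in[m], j\in[n-1]\}\cup\{C_n\}$ is a basis for the set $\Gamma_{m,n}$ of $m\times n$ stochastic matrices, i.e., it consists of $m(n-1)+1$ linearly independent stochastic matrices whose linear span contains $\Gamma_{m,n}$.
   Context: A real $m\times n$ matrix is stochastic if its entries are nonnegative and each row sums to $1$; $\Gamma_{m,n}$ is the set of such matrices (an affine set of dimension $m(n-1)$). For $i\in[m]$, $j\in[n-1]$, $B_{i,j}$ is the $m\times n$ $(0,1)$-matrix whose $(i,j)$ entry is $1$, whose $(j+1)$-th column has all entries $1$ except the $(i,j+1)$ entry which is $0$, and all of whose other entries are $0$. $C_n$ is the $m\times n$ $(0,1)$-matrix whose $n$-th column is all $1$'s and other entries $0$. *)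

theory Defs
  imports "HOL-Analysis.Analysis" "HOL-Library.Function_Algebras"
begin

text \<open>An m x n real matrix is modelled as a function nat => nat => real whose entries
  are indexed 1-based by row r in {1..m} and column s in {1..n}, and which vanishes
  outside that index range. Addition is pointwise (Function_Algebras).\<close>

definition mscale :: "real \<Rightarrow> (nat \<Rightarrow> nat \<Rightarrow> real) \<Rightarrow> (nat \<Rightarrow> nat \<Rightarrow> real)" where
  "mscale c A = (\<lambda>r s. c * A r s)"

definition is_mat :: "nat \<Rightarrow> nat \<Rightarrow> (nat \<Rightarrow> nat \<Rightarrow> real) \<Rightarrow> bool" where
  "is_mat m n A \<longleftrightarrow> (\<forall>r s. r \<notin> {1..m} \<or> s \<notin> {1..n} \<longrightarrow> A r s = 0)"

definition Gamma :: "nat \<Rightarrow> nat \<Rightarrow> (nat \<Rightarrow> nat \<Rightarrow> real) set" where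
  "Gamma m n = {A. is_mat m n A \<and> (\<forall>r\<in>{1..m}. \<forall>s\<in>{1..n}. A r s \<ge> 0)
                 \<and> (\<forall>r\<in>{1..m}. (\<Sum>s=1..n. A r s) = 1)}"

definition Bmat :: "nat \<Rightarrow> nat \<Rightarrow> nat \<Rightarrow> nat \<Rightarrow> (nat \<Rightarrow> nat \<Rightarrow> real)" where
  "Bmat m n i j = (\<lambda>r s. if r \<in> {1..m} \<and> s \<in> {1..n} then
       (if r = i \<and> s = j then 1 else if s = j + 1 \<and> r \<noteq> i then 1 else 0) else 0)"

definition Cmat :: "nat \<Rightarrow> nat \<Rightarrow> (nat \<Rightarrow> nat \<Rightarrow> real)" where
  "Cmat m n = (\<lambda>r s. if r \<in> {1..m} \<and> s = n then 1 else 0)"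

end

theory Submission
  imports Defs
begin

text \<open>For a combination M = \<Sum> a(i,j) B(i,j) + c C of the candidate basis, entry (r,s) of
  M is a(r,s) (present if s < n) plus the sum of a(i,s-1) over the rows i \<noteq> r (present if s > 1),
  plus c in the last column. So the coefficients are determined column by column, each column
  from the previous one. If M = 0, induction on the column gives a = 0, and then c = 0 from
  entry (1,n). Conversely, for a stochastic A the same recursion reproduces columns 1, ..., n-1
  of A; since every B(i,j) and C has unit row sums, c = 1 - \<Sum> a(i,j) gives M unit row sums,
  which forces the last column of M to agree with that of A as well.\<close>

lemma sum_fun_apply: "sum f A x = (\<Sum>a\<in>A. f a x)"
  by (induction A rule: infinite_finite_induct) auto

interpretation mat: module mscale
  by unfold_locales (auto simp: mscale_def fun_eq_iff algebra_simps)

context module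
begin

lemma independent_insert_image:
  assumes "finite P" "inj_on f P" "c \<notin> f ` P"
    and only_trivial: "\<And>a d. (\<Sum>p\<in>P. scale (a p) (f p)) + scale d c = 0
      \<Longrightarrow> (\<forall>p\<in>P. a p = 0) \<and> d = 0"
  shows "independent (insert c (f ` P))"
proof -
  have "u v = 0"
    if sum0: "(\<Sum>v\<in>insert c (f ` P). scale (u v) v) = 0" and v: "v \<in> insert c (f ` P)" for u v
  proof -
    have "(\<Sum>p\<in>P. scale (u (f p)) (f p)) + scale (u c) c = 0"
      using sum0 assms(1-3) by (simp add: sum.reindex add.commute)
    then show ?thesis
      using only_trivial[of "\<lambda>p. u (f p)" "u c"] v by blast
  qed
  then show ?thesis
    using assms(1) by (auto simp: dependent_finite)
qed

end

definition Bcomb :: "nat \<Rightarrow> nat \<Rightarrow> (nat \<times> nat \<Rightarrow> real) \<Rightarrow> nat \<Rightarrow> nat \<Rightarrow> real" where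
  "Bcomb m n a = (\<Sum>p\<in>{1..m} \<times> {1..n-1}. mscale (a p) (case_prod (Bmat m n) p))"

lemma Bmat_entry:
  "r \<in> {1..m} \<Longrightarrow> s \<in> {1..n} \<Longrightarrow> Bmat m n i j r s =
     (if (i, j) = (r, s) then 1 else 0) + (if j + 1 = s \<and> i \<noteq> r then 1 else 0)"
  by (auto simp: Bmat_def)

lemma Bcomb_entry:
  assumes r: "r \<in> {1..m}" and s: "s \<in> {1..n}"
  shows "Bcomb m n a r s
    = (if s < n then a (r, s) else 0) + (if 1 < s then \<Sum>i\<in>{1..m}-{r}. a (i, s - 1) else 0)"
proof -
  let ?P = "{1..m} \<times> {1..n-1}"
  have "Bcomb m n a r s = (\<Sum>p\<in>?P. if p = (r, s) then a p else 0)
      + (\<Sum>p\<in>?P. if snd p = s - 1 \<and> 1 < s \<and> fst p \<noteq> r then a p else 0)"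
    unfolding Bcomb_def sum_fun_apply sum.distrib[symmetric]
    by (intro sum.cong refl) (auto simp: mscale_def Bmat_entry[OF r s] split: if_splits)
  also have "(\<Sum>p\<in>?P. if p = (r, s) then a p else 0) = (if s < n then a (r, s) else 0)"
    using r s by (auto simp: sum.delta')
  also have "(\<Sum>p\<in>?P. if snd p = s - 1 \<and> 1 < s \<and> fst p \<noteq> r then a p else 0)
      = (if 1 < s then \<Sum>i\<in>{1..m}-{r}. a (i, s - 1) else 0)"
  proof -
    have "{p\<in>?P. snd p = s - 1 \<and> 1 < s \<and> fst p \<noteq> r}
        = (if 1 < s then (\<lambda>i. (i, s - 1)) ` ({1..m}-{r}) else {})"
      using s by auto
    then show ?thesis
      by (simp add: sum.inter_filter[symmetric] sum.reindex inj_on_def)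
  qed
  finally show ?thesis .
qed

lemma Bcomb_outside: "r \<notin> {1..m} \<or> s \<notin> {1..n} \<Longrightarrow> Bcomb m n a r s = 0"
  by (auto simp: Bcomb_def sum_fun_apply mscale_def Bmat_def case_prod_beta intro!: sum.neutral)

lemma Bmat_row_sum:
  assumes "i \<in> {1..m}" "j \<in> {1..n-1}" "r \<in> {1..m}"
  shows "(\<Sum>s=1..n. Bmat m n i j r s) = 1"
proof -
  have "(\<Sum>s=1..n. Bmat m n i j r s)
      = (\<Sum>s=1..n. if s = j then (if i = r then 1 else 0) else 0)
        + (\<Sum>s=1..n. if s = j + 1 then (if i \<noteq> r then 1 else 0) else 0)"
    unfolding sum.distrib[symmetric] using assms(3) by (intro sum.cong refl) (auto simp: Bmat_entry)
  also have "\<dots> = 1"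
    using assms by (auto simp: sum.delta')
  finally show ?thesis .
qed

lemma Bmat_in_Gamma: "i \<in> {1..m} \<Longrightarrow> j \<in> {1..n-1} \<Longrightarrow> Bmat m n i j \<in> Gamma m n"
  using Bmat_row_sum by (auto simp: Gamma_def is_mat_def Bmat_def)

lemma Cmat_in_Gamma: "0 < n \<Longrightarrow> Cmat m n \<in> Gamma m n"
  by (auto simp: Gamma_def is_mat_def Cmat_def sum.delta')

lemma inj_on_Bmat: "inj_on (case_prod (Bmat m n)) ({1..m} \<times> {1..n-1})"
proof (rule inj_onI, clarify)
  fix i j i' j'
  assume ij: "i \<in> {1..m}" "j \<in> {1..n-1}" "i' \<in> {1..m}" "j' \<in> {1..n-1}"
    and eq: "Bmat m n i j = Bmat m n i' j'"
  have "Bmat m n i j i j = 1" "Bmat m n i' j' i' j' = 1"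
    using ij by (auto simp: Bmat_def)
  then have "Bmat m n i' j' i j = 1" "Bmat m n i j i' j' = 1"
    by (simp_all add: eq)
  then show "i = i' \<and> j = j'"
    using ij by (auto simp: Bmat_def split: if_splits)
qed

lemma Cmat_notin_Bmats: "Cmat m n \<notin> case_prod (Bmat m n) ` ({1..m} \<times> {1..n-1})"
proof
  assume "Cmat m n \<in> case_prod (Bmat m n) ` ({1..m} \<times> {1..n-1})"
  then obtain i j where ij: "i \<in> {1..m}" "j \<in> {1..n-1}" and eq: "Cmat m n = Bmat m n i j"
    by auto
  have "Bmat m n i j i j = 1" "Cmat m n i j = 0"
    using ij by (auto simp: Bmat_def Cmat_def)
  then have "Cmat m n i j = 1" "Cmat m n i j = 0"
    by (simp_all add: eq)
  then show False
    by simp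
qed

lemma Bcomb_plus_Cmat_eq_0D:
  assumes "0 < m" "0 < n" and comb0: "Bcomb m n a + mscale d (Cmat m n) = 0"
  shows "(\<forall>p\<in>{1..m} \<times> {1..n-1}. a p = 0) \<and> d = 0"
proof -
  have entry0: "Bcomb m n a r s + d * Cmat m n r s = 0" for r s
    using fun_cong[OF fun_cong[OF comb0, of r], of s] by (simp add: mscale_def)
  have column0: "\<forall>r\<in>{1..m}. a (r, s) = 0" if "0 < s" "s < n" for s
    using that
  proof (induction s)
    case (Suc k)
    have "Bcomb m n a r (Suc k) = 0" if "r \<in> {1..m}" for r
      using entry0[of r "Suc k"] Suc.prems by (simp add: Cmat_def)
    moreover have "(if 1 < Suc k then \<Sum>i\<in>{1..m}-{r}. a (i, Suc k - 1) else 0) = 0" for r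
      using Suc by auto
    ultimately show ?case
      using Suc.prems Bcomb_entry[of _ m "Suc k" n a] by auto
  qed simp
  have "(if 1 < n then \<Sum>i\<in>{1..m}-{1}. a (i, n - 1) else 0) = 0"
    using column0[of "n - 1"] by auto
  then have "d = 0"
    using entry0[of 1 n] Bcomb_entry[of 1 m n n a] assms(1,2) by (simp add: Cmat_def)
  moreover have "\<forall>p\<in>{1..m} \<times> {1..n-1}. a p = 0"
    using column0 by fastforce
  ultimately show ?thesis
    by simp
qed

text \<open>The coefficient a(i,j) of B(i,j) in A: by Bcomb_entry, A i (j+1) is a(i,j+1) plus the sum of
  a(r,j) over the rows r \<noteq> i (for 0 < j and j + 1 < n); solve for a(i,j+1).\<close>
fun Bcoeff :: "(nat \<Rightarrow> nat \<Rightarrow> real) \<Rightarrow> nat \<Rightarrow> nat \<Rightarrow> nat \<Rightarrow> real" where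
  "Bcoeff A m i 0 = 0"
| "Bcoeff A m i (Suc j) = A i (Suc j) - (\<Sum>r\<in>{1..m}-{i}. Bcoeff A m r j)"

lemma Bcomb_Bcoeff_entry:
  assumes "r \<in> {1..m}" "s \<in> {1..n-1}"
  shows "Bcomb m n (case_prod (Bcoeff A m)) r s = A r s"
proof -
  obtain k where k: "s = Suc k"
    using assms(2) by (cases s) auto
  then show ?thesis
    using assms Bcomb_entry[of r m s n] by (cases k) auto
qed

lemma Bcomb_row_sum:
  assumes "r \<in> {1..m}"
  shows "(\<Sum>s=1..n. Bcomb m n a r s) = sum a ({1..m} \<times> {1..n-1})"
proof -
  have "(\<Sum>s=1..n. Bcomb m n a r s)
      = (\<Sum>p\<in>{1..m} \<times> {1..n-1}. a p * (\<Sum>s=1..n. case_prod (Bmat m n) p r s))"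
    by (simp add: Bcomb_def sum_fun_apply mscale_def sum_distrib_left) (rule sum.swap)
  also have "\<dots> = sum a ({1..m} \<times> {1..n-1})"
    using assms Bmat_row_sum by (intro sum.cong) auto
  finally show ?thesis .
qed

lemma is_mat_eqI_row_sums:
  assumes "is_mat m n A" "is_mat m n A'" "0 < n"
    and rows: "\<And>r. r \<in> {1..m} \<Longrightarrow> (\<Sum>s=1..n. A r s) = (\<Sum>s=1..n. A' r s)"
    and columns: "\<And>r s. r \<in> {1..m} \<Longrightarrow> s \<in> {1..n-1} \<Longrightarrow> A r s = A' r s"
  shows "A = A'"
proof (intro ext)
  fix r s
  consider (outside) "r \<notin> {1..m} \<or> s \<notin> {1..n}" | (first) "r \<in> {1..m}" "s \<in> {1..n-1}"
    | (last) "r \<in> {1..m}" "s = n"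
    by fastforce
  then show "A r s = A' r s"
  proof cases
    case outside
    then show ?thesis
      using assms(1,2) by (simp add: is_mat_def)
  next
    case first
    then show ?thesis
      by (rule columns)
  next
    case last
    have split_last: "(\<Sum>s=1..n. B r s) = B r n + (\<Sum>s=1..n-1. B r s)" for B :: "nat \<Rightarrow> nat \<Rightarrow> real"
      using \<open>0 < n\<close> by (cases n) (auto simp: sum.nat_ivl_Suc')
    have "(\<Sum>s=1..n-1. A r s) = (\<Sum>s=1..n-1. A' r s)"
      using columns last(1) by (intro sum.cong) auto
    then show ?thesis
      using rows[OF last(1)] split_last[of A] split_last[of A'] last(2) by simp
  qed
qed

lemma Gamma_eq_Bcomb_plus_Cmat:
  assumes A: "A \<in> Gamma m n" and "0 < n"
  defines "a \<equiv> case_prod (Bcoeff A m)"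
  shows "A = Bcomb m n a + mscale (1 - sum a ({1..m} \<times> {1..n-1})) (Cmat m n)"
proof (rule is_mat_eqI_row_sums[where m = m and n = n])
  show "is_mat m n A"
    using A by (simp add: Gamma_def)
  show "is_mat m n (Bcomb m n a + mscale (1 - sum a ({1..m} \<times> {1..n-1})) (Cmat m n))"
    using \<open>0 < n\<close> Bcomb_outside by (auto simp: is_mat_def mscale_def Cmat_def)
  show "(\<Sum>s=1..n. A r s)
      = (\<Sum>s=1..n. (Bcomb m n a + mscale (1 - sum a ({1..m} \<times> {1..n-1})) (Cmat m n)) r s)"
    if "r \<in> {1..m}" for r
    using A Cmat_in_Gamma[OF \<open>0 < n\<close>, of m] Bcomb_row_sum[OF that, of n a] that
    by (simp add: Gamma_def sum.distrib mscale_def flip: sum_distrib_left)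
  show "A r s = (Bcomb m n a + mscale (1 - sum a ({1..m} \<times> {1..n-1})) (Cmat m n)) r s"
    if "r \<in> {1..m}" "s \<in> {1..n-1}" for r s
    using that Bcomb_Bcoeff_entry[of r m s n A] by (auto simp: a_def mscale_def Cmat_def)
qed fact

theorem mainTheorem8:
  fixes m n :: nat
  assumes "m > 0" and "n > 0"
  defines "S \<equiv> {Bmat m n i j | i j. i \<in> {1..m} \<and> j \<in> {1..n-1}} \<union> {Cmat m n}"
  shows "S \<subseteq> Gamma m n \<and> card S = m * (n - 1) + 1
         \<and> \<not> module.dependent mscale S \<and> Gamma m n \<subseteq> module.span mscale S"
proof -
  let ?P = "{1..m} \<times> {1..n-1}"
  have S: "S = insert (Cmat m n) (case_prod (Bmat m n) ` ?P)"
    unfolding S_def by fastforce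
  have "S \<subseteq> Gamma m n"
    using Bmat_in_Gamma Cmat_in_Gamma \<open>n > 0\<close> unfolding S by auto
  moreover have "card S = m * (n - 1) + 1"
    using inj_on_Bmat Cmat_notin_Bmats by (simp add: S card_image)
  moreover have "\<not> module.dependent mscale S"
    unfolding S using inj_on_Bmat Cmat_notin_Bmats Bcomb_plus_Cmat_eq_0D[OF assms(1,2)]
    by (intro mat.independent_insert_image) (auto simp: Bcomb_def)
  moreover have "Gamma m n \<subseteq> module.span mscale S"
  proof
    fix A
    assume "A \<in> Gamma m n"
    have "Bcomb m n a \<in> module.span mscale S" for a
      unfolding Bcomb_def S by (intro mat.span_sum mat.span_scale mat.span_base) auto
    moreover have "mscale c (Cmat m n) \<in> module.span mscale S" for c
      unfolding S by (intro mat.span_scale mat.span_base) simp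
    ultimately show "A \<in> module.span mscale S"
      using Gamma_eq_Bcomb_plus_Cmat[OF \<open>A \<in> Gamma m n\<close> \<open>n > 0\<close>] by (metis mat.span_add)
  qed
  ultimately show ?thesis
    by blast
qed

end
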